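(* Suppose that the modal operator $\bullet$ occurs neither in any type of the typing context $\Gamma$ nor in the type expression $A$ (note that $\top=\mu X.\bullet X$ contains $\bullet$). If $\Gamma\vdash M:A$ is derivable in $\lambda$A, then $M$ is $\beta$-normalizable.
   Context: Type expressions: fix a countably infinite set of type variables $X,Y,Z,\dots$. Pseudo type expressions are generated by $A::=X\mid A\to A\mid \bullet A\mid \mu X.A$ ($\mu$ binds $X$; $\alpha$-convertible expressions are identified; $\to$ associates to the right; $\bullet$ binds tighter than $\to$, which binds tighter than $\mu$). $A[B/X]$ denotes capture-avoiding substitution. $\top$ abbreviates $\mu X.\bullet X$, and $\bullet^n A$ denotes $A$ prefixed by $n$ copies of $\bullet$. The tail $t(A)$ is defined by $t(X)=X$, $t(A\to B)=t(B)$, $t(\bullet A)=\bullet t(A)$, $t(\mu X.A)=\mu X.t(A)$; it always has the form $\bullet^{m_0}\mu X_1.\bullet^{m_1}\mu X_2.\cdots\mu X_n.\bullet^{m_n}Y$. $A$ is a $\top$-variant iff $Y=X_i$ for some $1\le i\le n$ with $X_i\notin\{X_{i+1},\dots,X_n\}$ and $m_i+\dots+m_n\ge 1$. $A$ is proper in $X$ iff: a variable $Y$ is proper in $X$ iff $Y\neq X$; $\bullet A$ is always proper in $X$; $A\to B$ is proper in $X$ iff both $A,B$ are proper in $X$ or $B$ is a $\top$-variant; for $Y\ne X$, $\mu Y.A$ is proper in $X$ iff $A$ is proper in $X$ or $\mu Y.A$ is a $\top$-variant. Type expressions are the least set of pseudo type expressions containing all type variables, closed under $\to$ and $\bullet$,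 and containing $\mu X.A$ whenever it contains $A$ and $A$ is proper in $X$. Equality: $\cong$ is the least relation on type expressions such that: $A\cong A$; $A\cong B$ implies $B\cong A$; $A\cong B$ and $B\cong C$ imply $A\cong C$; $A\cong B$ implies $\bullet A\cong\bullet B$; $A\cong C$ and $B\cong D$ imply $A\to B\cong C\to D$; $A\to\top\cong\top$; $\mu X.A\cong A[\mu X.A/X]$; and if $A\cong C[A/X]$ with $C$ proper in $X$, then $A\cong\mu X.C$. $\simeq$ is the least relation satisfying the same closure conditions and additionally $\bullet(A\to B)\simeq\bullet A\to\bullet B$. Subtyping: a subtyping assumption $\gamma$ is a finite set of pairs $X\preceq Y$ of type variables in which each type variable occurs at most once; $FTV(\gamma)$ is the set of variables occurring in it. Judgments $\gamma\vdash A\preceq B$ are derived by the rules: $\gamma\cup\{X\preceq Y\}\vdash X\preceq Y$; $\gamma\vdash A\preceq\top$; from $A\simeq B$ infer $\gamma\vdash A\preceq B$; from $\gamma_1\vdash A\preceq B$ and $\gamma_2\vdash B\preceq C$ infer $\gamma_1\cup\gamma_2\vdash A\preceq C$; from $\gamma\vdash A\preceq B$ infer $\gamma\vdash\bullet A\preceq\bullet B$; from $\gamma_1\vdash A'\preceq A$ and $\gamma_2\vdash B\preceq B'$ infer $\gamma_1\cup\gamma_2\vdash A\to B\preceq A'\to B'$; from $\gamma\cup\{X\preceq Y\}\vdash A\preceq B$ infer $\gamma\vdash\mu X.A\preceq\mu Y.B$, provided $X\notin FTV(\gamma)\cup FTV(B)$, $Y\notin FTV(\gamma)\cup FTV(A)$,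 $A$ is proper in $X$ and $B$ is proper in $Y$; and $\gamma\vdash A\preceq\bullet A$. All sets $\gamma\cup\{X\preceq Y\}$, $\gamma_1\cup\gamma_2$ must be well-formed subtyping assumptions. $A\preceq B$ means $\{\}\vdash A\preceq B$ is derivable. Typing system $\lambda$A: untyped $\lambda$-terms $M::=x\mid\lambda x.M\mid MM$ (identified up to $\alpha$-conversion). A typing context $\Gamma$ is a finite map from individual variables to type expressions, written $\{x_1:A_1,\dots,x_n:A_n\}$; $\bullet\Gamma$ is $\{x_1:\bullet A_1,\dots,x_n:\bullet A_n\}$; unions of contexts must be well-formed (a variable receives at most one type). Rules: (var) $\Gamma\cup\{x:A\}\vdash x:A$; (shift) from $\bullet\Gamma\vdash M:\bullet A$ infer $\Gamma\vdash M:A$; ($\top$) $\Gamma\vdash M:\top$; ($\preceq$) from $\Gamma\vdash M:A$ and $A\preceq B$ infer $\Gamma\vdash M:B$; ($\to$I) from $\Gamma\cup\{x:A\}\vdash M:B$ infer $\Gamma\vdash\lambda x.M:A\to B$; ($\to$E) from $\Gamma_1\vdash M:A\to B$ and $\Gamma_2\vdash N:A$ infer $\Gamma_1\cup\Gamma_2\vdash MN:B$. *)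

theory Defs
  imports Main
begin

text \<open>Free type variables are named by natural numbers (TV X); variables bound by
  mu are de Bruijn indices (TB i). Alpha-convertible expressions are thus identical.\<close>

datatype ty = TV nat | TB nat | Arr ty ty | Lat ty | Mu ty

definition top :: ty where "top = Mu (Lat (TB 0))"

fun fv :: "ty \<Rightarrow> nat set" where
  "fv (TV X) = {X}"
| "fv (TB i) = {}"
| "fv (Arr A B) = fv A \<union> fv B"
| "fv (Lat A) = fv A"
| "fv (Mu A) = fv A"

text \<open>Opening: substitute U for the bound variable with index k (U locally closed).\<close>
fun open_rec :: "nat \<Rightarrow> ty \<Rightarrow> ty \<Rightarrow> ty" where
  "open_rec k U (TV X) = TV X"
| "open_rec k U (TB i) = (if i = k then U else TB i)"
| "open_rec k U (Arr A B) = Arr (open_rec k U A) (open_rec k U B)"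
| "open_rec k U (Lat A) = Lat (open_rec k U A)"
| "open_rec k U (Mu A) = Mu (open_rec (Suc k) U A)"

definition open_ty :: "ty \<Rightarrow> ty \<Rightarrow> ty" where
  "open_ty A U = open_rec 0 U A"

fun tail :: "ty \<Rightarrow> ty" where
  "tail (TV X) = TV X"
| "tail (TB i) = TB i"
| "tail (Arr A B) = tail B"
| "tail (Lat A) = Lat (tail A)"
| "tail (Mu A) = Mu (tail A)"

text \<open>The list bs records, for every mu binder passed so far
  (innermost first, i.e. indexed by de Bruijn index), whether at least one bullet occurs
  after that binder. The final variable must be bound by one of the binders of the tail
  (a de Bruijn index pointing to it, which automatically means it is not shadowed) and at
  least one bullet must occur after that binder.\<close>
fun tv_aux :: "bool list \<Rightarrow> ty \<Rightarrow> bool" where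
  "tv_aux bs (TV X) = False"
| "tv_aux bs (TB i) = (i < length bs \<and> bs ! i)"
| "tv_aux bs (Arr A B) = False"
| "tv_aux bs (Lat A) = tv_aux (map (\<lambda>_. True) bs) A"
| "tv_aux bs (Mu A) = tv_aux (False # bs) A"

definition top_variant :: "ty \<Rightarrow> bool" where
  "top_variant A = tv_aux [] (tail A)"

fun proper :: "nat \<Rightarrow> ty \<Rightarrow> bool" where
  "proper k (TV Y) = True"
| "proper k (TB i) = (i \<noteq> k)"
| "proper k (Lat A) = True"
| "proper k (Arr A B) = ((proper k A \<and> proper k B) \<or> top_variant B)"
| "proper k (Mu A) = (proper (Suc k) A \<or> top_variant (Mu A))"

text \<open>Type expressions: texk k A means A is a type expression in which the dangling
  indices below k (variables bound further out) are treated as type variables.\<close>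
inductive texk :: "nat \<Rightarrow> ty \<Rightarrow> bool" where
  "texk k (TV X)"
| "i < k \<Longrightarrow> texk k (TB i)"
| "texk k A \<Longrightarrow> texk k B \<Longrightarrow> texk k (Arr A B)"
| "texk k A \<Longrightarrow> texk k (Lat A)"
| "texk (Suc k) A \<Longrightarrow> proper 0 A \<Longrightarrow> texk k (Mu A)"

definition texp :: "ty \<Rightarrow> bool" where
  "texp A = texk 0 A"

text \<open>teq False is the relation \<cong>, teq True is the relation \<simeq>
  (with the extra rule distributing bullet over arrow).\<close>
inductive teq :: "bool \<Rightarrow> ty \<Rightarrow> ty \<Rightarrow> bool" for e :: bool where
  refl: "texp A \<Longrightarrow> teq e A A"
| sym: "teq e A B \<Longrightarrow> teq e B A"
| trans: "teq e A B \<Longrightarrow> teq e B C \<Longrightarrow> teq e A C"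
| lat: "teq e A B \<Longrightarrow> teq e (Lat A) (Lat B)"
| arr: "teq e A C \<Longrightarrow> teq e B D \<Longrightarrow> teq e (Arr A B) (Arr C D)"
| arr_top: "texp A \<Longrightarrow> teq e (Arr A top) top"
| unfold: "texp (Mu A) \<Longrightarrow> teq e (Mu A) (open_ty A (Mu A))"
| fixpt: "texp A \<Longrightarrow> texp (Mu C) \<Longrightarrow> teq e A (open_ty C A) \<Longrightarrow> teq e A (Mu C)"
| dist: "e \<Longrightarrow> texp A \<Longrightarrow> texp B \<Longrightarrow> teq e (Lat (Arr A B)) (Arr (Lat A) (Lat B))"

abbreviation cong_ty :: "ty \<Rightarrow> ty \<Rightarrow> bool" where "cong_ty \<equiv> teq False"
abbreviation simeq_ty :: "ty \<Rightarrow> ty \<Rightarrow> bool" where "simeq_ty \<equiv> teq True"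

definition FTV :: "(nat \<times> nat) set \<Rightarrow> nat set" where
  "FTV g = fst ` g \<union> snd ` g"

definition wf_assm :: "(nat \<times> nat) set \<Rightarrow> bool" where
  "wf_assm g \<longleftrightarrow> finite g \<and> (\<forall>(X,Y)\<in>g. X \<noteq> Y) \<and>
     (\<forall>p\<in>g. \<forall>q\<in>g. p \<noteq> q \<longrightarrow> {fst p, snd p} \<inter> {fst q, snd q} = {})"

inductive sub :: "(nat \<times> nat) set \<Rightarrow> ty \<Rightarrow> ty \<Rightarrow> bool" where
  hyp: "wf_assm (g \<union> {(X,Y)}) \<Longrightarrow> sub (g \<union> {(X,Y)}) (TV X) (TV Y)"
| top: "wf_assm g \<Longrightarrow> texp A \<Longrightarrow> sub g A top"
| eq: "wf_assm g \<Longrightarrow> simeq_ty A B \<Longrightarrow> sub g A B"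
| trans: "sub g1 A B \<Longrightarrow> sub g2 B C \<Longrightarrow> wf_assm (g1 \<union> g2) \<Longrightarrow> sub (g1 \<union> g2) A C"
| lat: "sub g A B \<Longrightarrow> sub g (Lat A) (Lat B)"
| arr: "sub g1 A' A \<Longrightarrow> sub g2 B B' \<Longrightarrow> wf_assm (g1 \<union> g2) \<Longrightarrow>
         sub (g1 \<union> g2) (Arr A B) (Arr A' B')"
| mu: "sub (g \<union> {(X,Y)}) (open_ty A (TV X)) (open_ty B (TV Y)) \<Longrightarrow>
       wf_assm (g \<union> {(X,Y)}) \<Longrightarrow>
       X \<notin> fv (Mu A) \<Longrightarrow> Y \<notin> fv (Mu B) \<Longrightarrow>
       X \<notin> FTV g \<union> fv (open_ty B (TV Y)) \<Longrightarrow>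
       Y \<notin> FTV g \<union> fv (open_ty A (TV X)) \<Longrightarrow>
       proper 0 A \<Longrightarrow> proper 0 B \<Longrightarrow>
       sub g (Mu A) (Mu B)"
| later: "wf_assm g \<Longrightarrow> texp A \<Longrightarrow> sub g A (Lat A)"

definition subtype :: "ty \<Rightarrow> ty \<Rightarrow> bool" where
  "subtype A B = sub {} A B"

datatype tm = Var nat | Lam tm | App tm tm

fun lift :: "tm \<Rightarrow> nat \<Rightarrow> tm" where
  "lift (Var i) k = (if i < k then Var i else Var (Suc i))"
| "lift (Lam t) k = Lam (lift t (Suc k))"
| "lift (App s t) k = App (lift s k) (lift t k)"

fun subst :: "tm \<Rightarrow> tm \<Rightarrow> nat \<Rightarrow> tm" where
  "subst (Var i) s k = (if k < i then Var (i - 1) else if i = k then s else Var i)"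
| "subst (Lam t) s k = Lam (subst t (lift s 0) (Suc k))"
| "subst (App t u) s k = App (subst t s k) (subst u s k)"

inductive beta :: "tm \<Rightarrow> tm \<Rightarrow> bool" where
  "beta (App (Lam s) t) (subst s t 0)"
| "beta s t \<Longrightarrow> beta (App s u) (App t u)"
| "beta s t \<Longrightarrow> beta (App u s) (App u t)"
| "beta s t \<Longrightarrow> beta (Lam s) (Lam t)"

definition beta_normal :: "tm \<Rightarrow> bool" where
  "beta_normal M \<longleftrightarrow> \<not> (\<exists>N. beta M N)"

definition beta_normalizable :: "tm \<Rightarrow> bool" where
  "beta_normalizable M \<longleftrightarrow> (\<exists>N. beta\<^sup>*\<^sup>* M N \<and> beta_normal N)"

definition ctx_ok :: "(nat \<rightharpoonup> ty) \<Rightarrow> bool" where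
  "ctx_ok G \<longleftrightarrow> finite (dom G) \<and> (\<forall>A\<in>ran G. texp A)"

definition ctx_later :: "(nat \<rightharpoonup> ty) \<Rightarrow> (nat \<rightharpoonup> ty)" where
  "ctx_later G = (\<lambda>x. map_option Lat (G x))"

definition ctx_ext :: "ty \<Rightarrow> (nat \<rightharpoonup> ty) \<Rightarrow> (nat \<rightharpoonup> ty)" where
  "ctx_ext A G = (\<lambda>x. case x of 0 \<Rightarrow> Some A | Suc y \<Rightarrow> G y)"

text \<open>Union of two contexts is well-formed iff they agree on common variables.\<close>
definition compat :: "(nat \<rightharpoonup> ty) \<Rightarrow> (nat \<rightharpoonup> ty) \<Rightarrow> bool" where
  "compat G1 G2 \<longleftrightarrow> (\<forall>x\<in>dom G1 \<inter> dom G2. G1 x = G2 x)"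

inductive typing :: "(nat \<rightharpoonup> ty) \<Rightarrow> tm \<Rightarrow> ty \<Rightarrow> bool" where
  var: "ctx_ok G \<Longrightarrow> G x = Some A \<Longrightarrow> typing G (Var x) A"
| shift: "typing (ctx_later G) M (Lat A) \<Longrightarrow> typing G M A"
| top: "ctx_ok G \<Longrightarrow> typing G M top"
| sub: "typing G M A \<Longrightarrow> subtype A B \<Longrightarrow> typing G M B"
| arrI: "typing (ctx_ext A G) M B \<Longrightarrow> typing G (Lam M) (Arr A B)"
| arrE: "typing G1 M (Arr A B) \<Longrightarrow> typing G2 N A \<Longrightarrow> compat G1 G2 \<Longrightarrow>
          typing (G1 ++ G2) (App M N) B"

fun bullet_free :: "ty \<Rightarrow> bool" where
  "bullet_free (TV X) = True"
| "bullet_free (TB i) = True"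
| "bullet_free (Arr A B) = (bullet_free A \<and> bullet_free B)"
| "bullet_free (Lat A) = False"
| "bullet_free (Mu A) = bullet_free A"

end

theory Submission
  imports Defs
begin

text \<open>A step-indexed realizability argument. A type denotes a decreasing sequence of sets of
  terms closed under \<open>\<beta>\<close>-expansion: \<open>\<bullet>\<close> shifts the index by one, \<open>A \<rightarrow> B\<close> is the step-indexed
  function space, and \<open>\<mu>X. A\<close> is the unique fixed point of its body, which is contractive
  because the body is proper in \<open>X\<close>. Type equality, subtyping and typing are sound for this
  model. Interpreting every type variable by the weakly normalizing terms, a bullet-free type
  denotes at every index a set between the neutral and the weakly normalizing terms: in the
  arrow case, \<open>M x\<close> with \<open>x\<close> fresh normalizes only if \<open>M\<close> does, and without \<open>\<bullet>\<close> a proper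
  \<open>\<mu>\<close>-body ignores its bound variable. Variables are neutral, so the identity substitution
  realizes \<open>\<Gamma>\<close>, and \<open>M\<close> itself lies in the denotation of \<open>A\<close>.\<close>

section \<open>Renaming and parallel substitution\<close>

definition ren_up :: "(nat \<Rightarrow> nat) \<Rightarrow> nat \<Rightarrow> nat" where
  "ren_up f = (\<lambda>i. case i of 0 \<Rightarrow> 0 | Suc j \<Rightarrow> Suc (f j))"

fun ren :: "(nat \<Rightarrow> nat) \<Rightarrow> tm \<Rightarrow> tm" where
  "ren f (Var i) = Var (f i)"
| "ren f (Lam t) = Lam (ren (ren_up f) t)"
| "ren f (App s t) = App (ren f s) (ren f t)"

definition subst_up :: "(nat \<Rightarrow> tm) \<Rightarrow> nat \<Rightarrow> tm" where
  "subst_up s = (\<lambda>i. case i of 0 \<Rightarrow> Var 0 | Suc j \<Rightarrow> ren Suc (s j))"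

fun psubst :: "(nat \<Rightarrow> tm) \<Rightarrow> tm \<Rightarrow> tm" where
  "psubst s (Var i) = s i"
| "psubst s (Lam t) = Lam (psubst (subst_up s) t)"
| "psubst s (App a b) = App (psubst s a) (psubst s b)"

definition scons :: "tm \<Rightarrow> (nat \<Rightarrow> tm) \<Rightarrow> nat \<Rightarrow> tm" where
  "scons u s = (\<lambda>i. case i of 0 \<Rightarrow> u | Suc j \<Rightarrow> s j)"

lemma ren_ren: "ren f (ren g t) = ren (f \<circ> g) t"
proof (induction t arbitrary: f g)
  case (Lam t)
  have "ren_up f \<circ> ren_up g = ren_up (f \<circ> g)"
    by (auto simp: ren_up_def split: nat.splits)
  with Lam show ?case by (simp add: comp_def)
qed auto

lemma psubst_ren: "psubst s (ren f t) = psubst (s \<circ> f) t"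
proof (induction t arbitrary: s f)
  case (Lam t)
  have "subst_up s \<circ> ren_up f = subst_up (s \<circ> f)"
    by (auto simp: ren_up_def subst_up_def split: nat.splits)
  with Lam show ?case by (simp add: comp_def)
qed auto

lemma ren_psubst: "ren f (psubst s t) = psubst (ren f \<circ> s) t"
proof (induction t arbitrary: s f)
  case (Lam t)
  have "ren (ren_up f) \<circ> subst_up s = subst_up (ren f \<circ> s)"
    by (auto simp: subst_up_def ren_ren comp_def ren_up_def split: nat.splits)
  with Lam show ?case by (simp add: comp_def)
qed auto

lemma psubst_psubst: "psubst s (psubst r t) = psubst (psubst s \<circ> r) t"
proof (induction t arbitrary: s r)
  case (Lam t)
  have "psubst (subst_up s) \<circ> subst_up r = subst_up (psubst s \<circ> r)"
    by (auto simp: subst_up_def psubst_ren ren_psubst comp_def split: nat.splits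
        intro!: arg_cong2[where f = psubst])
  with Lam show ?case by (simp add: comp_def)
qed auto

lemma psubst_Var: "psubst Var t = t"
proof -
  have "subst_up Var = Var" by (auto simp: subst_up_def split: nat.splits)
  then show ?thesis by (induction t) auto
qed

lemma ren_eq_psubst: "ren f t = psubst (Var \<circ> f) t"
  using psubst_ren[of Var f t] by (simp add: psubst_Var)

lemma ren_id: "ren id t = t"
  by (simp add: ren_eq_psubst psubst_Var)

definition subst_fun :: "nat \<Rightarrow> tm \<Rightarrow> nat \<Rightarrow> tm" where
  "subst_fun k u i = (if k < i then Var (i - 1) else if i = k then u else Var i)"

lemma lift_eq_ren: "lift t k = ren (\<lambda>i. if i < k then i else Suc i) t"
proof (induction t arbitrary: k)
  case (Lam t)
  have "ren_up (\<lambda>i. if i < k then i else Suc i) = (\<lambda>i. if i < Suc k then i else Suc i)"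
    by (auto simp: ren_up_def split: nat.splits)
  with Lam show ?case by simp
qed auto

lemma subst_eq_psubst: "subst t u k = psubst (subst_fun k u) t"
proof (induction t arbitrary: k u)
  case (Lam t)
  have "subst_up (subst_fun k u) = subst_fun (Suc k) (lift u 0)"
    by (auto simp: subst_up_def subst_fun_def lift_eq_ren split: nat.splits)
  with Lam show ?case by simp
qed (auto simp: subst_fun_def)

lemma subst_psubst_subst_up: "subst (psubst (subst_up s) M) N 0 = psubst (scons N s) M"
proof -
  have "psubst (subst_fun 0 N) \<circ> subst_up s = scons N s"
    by (auto simp: subst_up_def subst_fun_def scons_def psubst_ren comp_def
        psubst_Var[unfolded comp_def] split: nat.splits cong: if_cong)
  then show ?thesis by (simp add: subst_eq_psubst psubst_psubst)
qed

section \<open>Weak normalization\<close>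

fun fv_tm :: "tm \<Rightarrow> nat set" where
  "fv_tm (Var i) = {i}"
| "fv_tm (Lam t) = {i. Suc i \<in> fv_tm t}"
| "fv_tm (App s t) = fv_tm s \<union> fv_tm t"

lemma finite_fv_tm: "finite (fv_tm t)"
proof (induction t)
  case (Lam t)
  have "fv_tm (Lam t) = Suc -` fv_tm t" by auto
  then show ?case using finite_vimageI[OF Lam inj_Suc] by simp
qed auto

lemma fv_tm_ren: "fv_tm (ren f t) = f ` fv_tm t"
proof (induction t arbitrary: f)
  case (Lam t)
  have "i \<in> f ` fv_tm (Lam t)" if "Suc i \<in> ren_up f ` fv_tm t" for i
    using that by (auto simp: ren_up_def split: nat.splits)
  moreover have "Suc (f j) \<in> ren_up f ` fv_tm t" if "Suc j \<in> fv_tm t" for j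
    using that by (force simp: ren_up_def)
  ultimately show ?case using Lam.IH[of "ren_up f"] by auto
qed (auto simp: image_Un)

lemma fv_tm_psubst: "fv_tm (psubst s t) \<subseteq> (\<Union>i\<in>fv_tm t. fv_tm (s i))"
proof (induction t arbitrary: s)
  case (Lam t)
  show ?case
  proof
    fix i assume "i \<in> fv_tm (psubst s (Lam t))"
    with Lam obtain j where j: "j \<in> fv_tm t" "Suc i \<in> fv_tm (subst_up s j)" by fastforce
    then obtain j' where "j = Suc j'" by (cases j) (auto simp: subst_up_def)
    with j show "i \<in> (\<Union>i\<in>fv_tm (Lam t). fv_tm (s i))"
      by (auto simp: subst_up_def fv_tm_ren)
  qed
qed fastforce+

lemma ren_cong: "(\<And>i. i \<in> fv_tm t \<Longrightarrow> f i = g i) \<Longrightarrow> ren f t = ren g t"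
proof (induction t arbitrary: f g)
  case (Lam t)
  have "ren_up f i = ren_up g i" if "i \<in> fv_tm t" for i
    using that Lam.prems by (cases i) (auto simp: ren_up_def)
  then show ?case using Lam.IH[of "ren_up f" "ren_up g"] by simp
next
  case (App a b)
  then show ?case by (metis UnCI fv_tm.simps(3) ren.simps(3))
qed simp

inductive_cases beta_VarE: "beta (Var i) t"
inductive_cases beta_LamE: "beta (Lam s) t"
inductive_cases beta_AppE: "beta (App s u) t"

lemma ren_subst0: "ren f (subst s t 0) = subst (ren (ren_up f) s) (ren f t) 0"
proof -
  have "ren f \<circ> subst_fun 0 t = subst_fun 0 (ren f t) \<circ> ren_up f"
    by (auto simp: subst_fun_def ren_up_def split: nat.splits)
  then show ?thesis by (simp add: subst_eq_psubst ren_psubst psubst_ren)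
qed

lemma beta_ren: "beta s t \<Longrightarrow> beta (ren f s) (ren f t)"
  by (induction arbitrary: f rule: beta.induct) (auto simp: ren_subst0 intro: beta.intros)

lemma beta_fv_tm: "beta s t \<Longrightarrow> fv_tm t \<subseteq> fv_tm s"
proof (induction rule: beta.induct)
  case (1 s t)
  have "fv_tm (subst s t 0) \<subseteq> (\<Union>i\<in>fv_tm s. fv_tm (subst_fun 0 t i))"
    by (simp add: subst_eq_psubst fv_tm_psubst)
  also have "\<dots> \<subseteq> fv_tm (App (Lam s) t)"
  proof
    fix x assume "x \<in> (\<Union>i\<in>fv_tm s. fv_tm (subst_fun 0 t i))"
    then obtain i where "i \<in> fv_tm s" "x \<in> fv_tm (subst_fun 0 t i)" by auto
    then show "x \<in> fv_tm (App (Lam s) t)" by (cases i) (auto simp: subst_fun_def)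
  qed
  finally show ?case .
qed auto

lemma beta_normal_ren: "beta_normal N \<Longrightarrow> beta_normal (ren f N)"
proof -
  have "\<exists>N'. beta N N'" if "beta (ren f N) Q" for Q
    using that
  proof (induction N arbitrary: f Q)
    case (Lam t)
    from Lam.prems obtain t' where "beta (ren (ren_up f) t) t'" by (auto elim: beta_LamE)
    with Lam.IH show ?case by (blast intro: beta.intros(4))
  next
    case (App a b)
    from App.prems consider (head) s' where "ren f a = Lam s'"
      | (left) a' where "beta (ren f a) a'" | (right) b' where "beta (ren f b) b'"
      by (auto elim: beta_AppE)
    then show ?case
    proof cases
      case head
      then show ?thesis by (cases a) (auto intro: beta.intros)
    qed (use App.IH in \<open>blast intro: beta.intros\<close>)+
  qed (auto elim: beta_VarE)
  then show "beta_normal N \<Longrightarrow> beta_normal (ren f N)"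
    unfolding beta_normal_def by blast
qed

abbreviation WN :: "tm \<Rightarrow> bool" where
  "WN \<equiv> beta_normalizable"

lemma rtranclp_beta_ren: "beta\<^sup>*\<^sup>* s t \<Longrightarrow> beta\<^sup>*\<^sup>* (ren f s) (ren f t)"
  by (induction rule: rtranclp_induct) (auto intro: rtranclp.rtrancl_into_rtrancl beta_ren)

lemma rtranclp_beta_Lam: "beta\<^sup>*\<^sup>* s t \<Longrightarrow> beta\<^sup>*\<^sup>* (Lam s) (Lam t)"
  by (induction rule: rtranclp_induct) (auto intro: rtranclp.rtrancl_into_rtrancl beta.intros)

lemma rtranclp_beta_App:
  "beta\<^sup>*\<^sup>* s s' \<Longrightarrow> beta\<^sup>*\<^sup>* t t' \<Longrightarrow> beta\<^sup>*\<^sup>* (App s t) (App s' t')"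
proof -
  have "beta\<^sup>*\<^sup>* (App s t) (App s' t)" if "beta\<^sup>*\<^sup>* s s'" for s s' t
    using that by (induction rule: rtranclp_induct) (auto intro: rtranclp.rtrancl_into_rtrancl beta.intros)
  moreover have "beta\<^sup>*\<^sup>* (App s t) (App s t')" if "beta\<^sup>*\<^sup>* t t'" for s t t'
    using that by (induction rule: rtranclp_induct) (auto intro: rtranclp.rtrancl_into_rtrancl beta.intros)
  ultimately show "beta\<^sup>*\<^sup>* s s' \<Longrightarrow> beta\<^sup>*\<^sup>* t t' \<Longrightarrow> beta\<^sup>*\<^sup>* (App s t) (App s' t')"
    by (meson rtranclp_trans)
qed

lemma WN_ren: "WN t \<Longrightarrow> WN (ren f t)"
  unfolding beta_normalizable_def using rtranclp_beta_ren beta_normal_ren by blast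

lemma WN_Lam: "WN t \<Longrightarrow> WN (Lam t)"
  unfolding beta_normalizable_def beta_normal_def
  using rtranclp_beta_Lam by (blast elim: beta_LamE)

lemma WN_beta_expand: "beta M M' \<Longrightarrow> WN M' \<Longrightarrow> WN M"
  unfolding beta_normalizable_def by (meson converse_rtranclp_into_rtranclp)

lemma WN_Lam_if_WN_subst_fresh:
  assumes "WN (subst t (Var x) 0)" and "x \<notin> fv_tm (Lam t)"
  shows "WN (Lam t)"
proof -
  define g where "g i = (if i = x then 0 else Suc i)" for i
  have "subst_fun 0 (Var x) = Var \<circ> (\<lambda>i. case i of 0 \<Rightarrow> x | Suc j \<Rightarrow> j)"
    by (auto simp: subst_fun_def split: nat.splits)
  then have "ren g (subst t (Var x) 0) = ren (g \<circ> (\<lambda>i. case i of 0 \<Rightarrow> x | Suc j \<Rightarrow> j)) t"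
    \<comment> \<open>\<open>g\<close> renames \<open>x\<close> back to the bound index, undoing the substitution\<close>
    by (simp add: subst_eq_psubst ren_eq_psubst[symmetric] ren_ren)
  also have "\<dots> = ren id t"
    using assms(2) by (intro ren_cong) (auto simp: g_def split: nat.splits)
  finally show ?thesis using WN_ren[OF assms(1), of g] WN_Lam by (simp add: ren_id)
qed

lemma WN_of_WN_App_Var_fresh:
  assumes "WN (App M (Var x))" and "x \<notin> fv_tm M"
  shows "WN M"
proof -
  obtain N where N: "beta\<^sup>*\<^sup>* (App M (Var x)) N" "beta_normal N"
    using assms(1) unfolding beta_normalizable_def by blast
  have "WN M" if "beta\<^sup>*\<^sup>* P N" "P = App M (Var x)" "x \<notin> fv_tm M" for P M
    using that
  proof (induction arbitrary: M rule: converse_rtranclp_induct)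
    case base
    with N(2) have "beta_normal M" unfolding beta_normal_def by (auto intro: beta.intros)
    then show ?case unfolding beta_normalizable_def by blast
  next
    case (step P P')
    from step.hyps(1) step.prems(1) consider (head) t where "M = Lam t" "P' = subst t (Var x) 0"
      | (left) M' where "P' = App M' (Var x)" "beta M M'"
      by (auto elim: beta_AppE beta_VarE)
    then show ?case
    proof cases
      case head
      have "WN P'" using step.hyps(2) N(2) unfolding beta_normalizable_def by blast
      with head step.prems(2) show ?thesis using WN_Lam_if_WN_subst_fresh by simp
    next
      case left
      with step.prems(2) beta_fv_tm have "WN M'" by (intro step.IH) auto
      with left show ?thesis using WN_beta_expand by blast
    qed
  qed
  with N assms(2) show ?thesis by blast
qed

inductive neutral :: "tm \<Rightarrow> bool" where
  "neutral (Var x)"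
| "neutral s \<Longrightarrow> WN t \<Longrightarrow> neutral (App s t)"

lemma neutral_reduces_to_normal:
  "neutral s \<Longrightarrow> \<exists>s'. beta\<^sup>*\<^sup>* s s' \<and> beta_normal s' \<and> (\<forall>u. s' \<noteq> Lam u)"
proof (induction rule: neutral.induct)
  case (1 x)
  then show ?case unfolding beta_normal_def by (auto elim: beta_VarE)
next
  case (2 s t)
  then obtain s' t' where s': "beta\<^sup>*\<^sup>* s s'" "beta_normal s'" "\<forall>u. s' \<noteq> Lam u"
    and t': "beta\<^sup>*\<^sup>* t t'" "beta_normal t'"
    unfolding beta_normalizable_def by blast
  have "beta_normal (App s' t')"
    using s'(2,3) t'(2) unfolding beta_normal_def by (auto elim: beta_AppE)
  with s' t' show ?case using rtranclp_beta_App by blast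
qed

lemma WN_if_neutral: "neutral s \<Longrightarrow> WN s"
  unfolding beta_normalizable_def using neutral_reduces_to_normal by blast

section \<open>Well-formed types\<close>

inductive_cases texk_TBE: "texk k (TB i)"
inductive_cases texk_ArrE: "texk k (Arr A B)"
inductive_cases texk_LatE: "texk k (Lat A)"
inductive_cases texk_MuE: "texk k (Mu A)"

lemma texk_mono: "texk k A \<Longrightarrow> k \<le> k' \<Longrightarrow> texk k' A"
  by (induction arbitrary: k' rule: texk.induct) (auto intro: texk.intros)

lemma proper_if_texk: "texk k U \<Longrightarrow> k \<le> m \<Longrightarrow> proper m U"
  by (induction arbitrary: m rule: texk.induct) auto

lemma tv_aux_tail_open_rec:
  "tv_aux bs (tail B) \<Longrightarrow> length bs \<le> j \<Longrightarrow> tv_aux bs (tail (open_rec j U B))"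
  by (induction B arbitrary: bs j) auto

lemma tv_aux_tail_open_rec_TV_D:
  "tv_aux bs (tail (open_rec j (TV X) B)) \<Longrightarrow> tv_aux bs (tail B)"
  by (induction B arbitrary: bs j) (auto split: if_splits)

lemma proper_open_rec: "proper m A \<Longrightarrow> j \<noteq> m \<Longrightarrow> texk 0 U \<Longrightarrow> proper m (open_rec j U A)"
proof (induction A arbitrary: m j)
  case (TB i) then show ?case using proper_if_texk by auto
next
  case (Arr A B) then show ?case using tv_aux_tail_open_rec[of "[]" B j U] by (auto simp: top_variant_def)
next
  case (Mu A) then show ?case using tv_aux_tail_open_rec[of "[False]" A "Suc j" U] by (auto simp: top_variant_def)
qed auto

lemma proper_open_rec_TV_D: "proper m (open_rec j (TV X) A) \<Longrightarrow> j \<noteq> m \<Longrightarrow> proper m A"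
proof (induction A arbitrary: m j)
  case (Arr A B) then show ?case using tv_aux_tail_open_rec_TV_D[of "[]" j X B] by (auto simp: top_variant_def)
next
  case (Mu A) then show ?case using tv_aux_tail_open_rec_TV_D[of "[False]" "Suc j" X A] by (auto simp: top_variant_def)
qed (auto split: if_splits)

lemma texk_open_rec: "texk (Suc k) A \<Longrightarrow> texk 0 U \<Longrightarrow> texk k (open_rec k U A)"
proof (induction A arbitrary: k)
  case (TB i) then show ?case using texk_mono by (auto elim!: texk_TBE intro: texk.intros)
next
  case (Mu A)
  from Mu.prems(1) have "texk (Suc (Suc k)) A" "proper 0 A" by (auto elim: texk_MuE)
  with Mu show ?case using proper_open_rec[of 0 A "Suc k" U] by (auto intro: texk.intros)
qed (auto elim!: texk_ArrE texk_LatE intro: texk.intros)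

lemma texk_open_rec_TV_D: "texk k (open_rec k (TV X) A) \<Longrightarrow> texk (Suc k) A"
proof (induction A arbitrary: k)
  case (TB i) then show ?case by (auto elim!: texk_TBE intro: texk.intros split: if_splits)
next
  case (Mu A)
  from Mu.prems(1) have "texk (Suc k) (open_rec (Suc k) (TV X) A)" "proper 0 (open_rec (Suc k) (TV X) A)"
    by (auto elim: texk_MuE)
  with Mu show ?case using proper_open_rec_TV_D[of 0 "Suc k" X A] by (auto intro: texk.intros)
qed (auto elim!: texk_ArrE texk_LatE intro: texk.intros)

lemma texp_open_ty_TV_D: "texp (open_ty A (TV X)) \<Longrightarrow> texk 1 A"
  using texk_open_rec_TV_D[of 0 X A] by (simp add: texp_def open_ty_def)

lemma texp_Lat_iff [simp]: "texp (Lat A) \<longleftrightarrow> texp A"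
  unfolding texp_def by (auto elim: texk_LatE intro: texk.intros)

lemma texp_Arr_iff [simp]: "texp (Arr A B) \<longleftrightarrow> texp A \<and> texp B"
  unfolding texp_def by (auto elim: texk_ArrE intro: texk.intros)

lemma texp_top: "texp top"
  unfolding texp_def top_def by (auto intro!: texk.intros)

lemma teq_texp: "teq e A B \<Longrightarrow> texp A \<and> texp B"
proof (induction rule: teq.induct)
  case (unfold A)
  then have "texk 1 A" by (auto simp: texp_def elim: texk_MuE)
  with unfold show ?case using texk_open_rec[of 0 A "Mu A"] by (auto simp: texp_def open_ty_def)
qed (auto simp: texp_top)

lemma sub_texp: "sub g A B \<Longrightarrow> texp A \<and> texp B"
proof (induction rule: sub.induct)
  case (mu g X Y A B)
  then show ?case using texp_open_ty_TV_D by (auto simp: texp_def intro: texk.intros)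
qed (auto simp: texp_top texp_def[of "TV _"] intro: texk.intros dest: teq_texp)

lemma ctx_ok_ctx_later [simp]: "ctx_ok (ctx_later G) \<longleftrightarrow> ctx_ok G"
proof -
  have "dom (ctx_later G) = dom G" "ran (ctx_later G) = Lat ` ran G"
    by (auto simp: ctx_later_def ran_def)
  then show ?thesis by (simp add: ctx_ok_def)
qed

lemma ctx_ok_ctx_ext [simp]: "ctx_ok (ctx_ext A G) \<longleftrightarrow> texp A \<and> ctx_ok G"
proof -
  have "dom (ctx_ext A G) = insert 0 (Suc ` dom G)"
  proof (rule set_eqI)
    show "x \<in> dom (ctx_ext A G) \<longleftrightarrow> x \<in> insert 0 (Suc ` dom G)" for x
      by (cases x) (auto simp: ctx_ext_def)
  qed
  moreover have "ran (ctx_ext A G) = insert A (ran G)"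
  proof (rule set_eqI, rule iffI)
    fix B assume "B \<in> ran (ctx_ext A G)"
    then obtain x where "ctx_ext A G x = Some B" by (auto simp: ran_def)
    then show "B \<in> insert A (ran G)" by (cases x) (auto simp: ctx_ext_def ran_def)
  next
    fix B
    have "ctx_ext A G 0 = Some A" "ctx_ext A G (Suc x) = G x" for x
      by (simp_all add: ctx_ext_def)
    then show "B \<in> insert A (ran G) \<Longrightarrow> B \<in> ran (ctx_ext A G)"
      by (auto simp: ran_def) metis
  qed
  ultimately show ?thesis by (auto simp: ctx_ok_def finite_image_iff)
qed

lemma ctx_ok_map_add: "ctx_ok G1 \<Longrightarrow> ctx_ok G2 \<Longrightarrow> ctx_ok (G1 ++ G2)"
proof -
  have "ran (G1 ++ G2) \<subseteq> ran G1 \<union> ran G2"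
    by (auto simp: ran_def map_add_def split: option.splits)
  then show "ctx_ok G1 \<Longrightarrow> ctx_ok G2 \<Longrightarrow> ctx_ok (G1 ++ G2)"
    by (auto simp: ctx_ok_def)
qed

lemma texp_if_ctx_ok: "ctx_ok G \<Longrightarrow> G x = Some A \<Longrightarrow> texp A"
  by (auto simp: ctx_ok_def ran_def)

lemma typing_wf: "typing G M A \<Longrightarrow> ctx_ok G \<and> texp A"
  by (induction rule: typing.induct)
    (auto simp: texp_top subtype_def dest: sub_texp ctx_ok_map_add texp_if_ctx_ok)

section \<open>A step-indexed model\<close>

type_synonym sem = "nat \<Rightarrow> tm set"

definition sem_univ :: sem where
  "sem_univ = (\<lambda>_. UNIV)"

definition sem_later :: "sem \<Rightarrow> sem" where
  "sem_later S n = (case n of 0 \<Rightarrow> UNIV | Suc m \<Rightarrow> S m)"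

definition sem_arr :: "sem \<Rightarrow> sem \<Rightarrow> sem" where
  "sem_arr S T n = {M. \<forall>k\<le>n. \<forall>N\<in>S k. App M N \<in> T k}"

definition sem_fix :: "(sem \<Rightarrow> sem) \<Rightarrow> sem" where
  "sem_fix F n = (F ^^ Suc n) sem_univ n"

fun interp :: "ty \<Rightarrow> (nat \<Rightarrow> sem) \<Rightarrow> sem list \<Rightarrow> sem" where
  "interp (TV X) r b = r X"
| "interp (TB i) r b = (if i < length b then b ! i else sem_univ)"
| "interp (Arr A B) r b = sem_arr (interp A r b) (interp B r b)"
| "interp (Lat A) r b = sem_later (interp A r b)"
| "interp (Mu A) r b = sem_fix (\<lambda>S. interp A r (S # b))"

definition agree :: "nat \<Rightarrow> sem \<Rightarrow> sem \<Rightarrow> bool" where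
  "agree n S T \<longleftrightarrow> (\<forall>k<n. S k = T k)"

definition contractive :: "(sem \<Rightarrow> sem) \<Rightarrow> bool" where
  "contractive F \<longleftrightarrow> (\<forall>n S T. agree n S T \<longrightarrow> agree (Suc n) (F S) (F T))"

lemma agree_refl [simp]: "agree n S S"
  by (simp add: agree_def)

lemma agree_trans: "agree n S T \<Longrightarrow> agree n T R \<Longrightarrow> agree n S R"
  by (simp add: agree_def)

lemma agree_mono: "agree n S T \<Longrightarrow> m \<le> n \<Longrightarrow> agree m S T"
  by (simp add: agree_def)

lemma contractiveD: "contractive F \<Longrightarrow> agree n S T \<Longrightarrow> agree (Suc n) (F S) (F T)"
  unfolding contractive_def by blast

lemma agree_funpow_sem_univ:
  assumes "contractive F"
  shows "agree j ((F ^^ j) sem_univ) ((F ^^ (j + m)) sem_univ)"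
  by (induction j) (auto simp: agree_def[of 0] intro: contractiveD[OF assms])

lemma agree_sem_fix_funpow:
  assumes "contractive F"
  shows "agree n (sem_fix F) ((F ^^ n) sem_univ)"
  unfolding agree_def
proof (intro allI impI)
  fix k assume "k < n"
  then obtain m where "n = Suc k + m" using less_imp_Suc_add by blast
  with agree_funpow_sem_univ[OF assms, of "Suc k" m] show "sem_fix F k = (F ^^ n) sem_univ k"
    unfolding agree_def sem_fix_def by simp
qed

lemma sem_fix_eq:
  assumes "contractive F"
  shows "F (sem_fix F) = sem_fix F"
proof
  fix n
  have "agree (Suc n) (F (sem_fix F)) (F ((F ^^ n) sem_univ))"
    by (rule contractiveD[OF assms agree_sem_fix_funpow[OF assms]])
  then show "F (sem_fix F) n = sem_fix F n"
    unfolding agree_def sem_fix_def by simp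
qed

lemma sem_fix_unique:
  assumes "contractive F" and "F S = S"
  shows "S = sem_fix F"
proof -
  have "agree n S (sem_fix F)" for n
  proof (induction n)
    case (Suc n)
    from contractiveD[OF assms(1) Suc] show ?case
      unfolding assms(2) sem_fix_eq[OF assms(1)] .
  qed (simp add: agree_def)
  then show ?thesis unfolding agree_def by blast
qed

lemma sem_fix_univ:
  assumes "F sem_univ = sem_univ"
  shows "sem_fix F = sem_univ"
proof (rule ext)
  fix n
  have "(F ^^ j) sem_univ = sem_univ" for j
    using assms by (induction j) simp_all
  then show "sem_fix F n = sem_univ n"
    unfolding sem_fix_def by (simp only:)
qed

lemma sem_fix_const:
  assumes "\<And>S. F S = F W"
  shows "sem_fix F = F W"
proof (rule ext)
  fix n
  have "(F ^^ Suc n) sem_univ = F W"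
    using assms[of "(F ^^ n) sem_univ"] by simp
  then show "sem_fix F n = F W n"
    unfolding sem_fix_def by (rule fun_cong)
qed

lemma sem_later_univ [simp]: "sem_later sem_univ = sem_univ"
  by (auto simp: sem_later_def sem_univ_def split: nat.splits)

lemma sem_arr_univ [simp]: "sem_arr S sem_univ = sem_univ"
  by (auto simp: sem_arr_def sem_univ_def)

lemma interp_top: "interp top r b = sem_univ"
  by (simp add: top_def sem_fix_univ)

lemma sem_later_arr: "sem_later (sem_arr S T) = sem_arr (sem_later S) (sem_later T)"
proof
  fix n show "sem_later (sem_arr S T) n = sem_arr (sem_later S) (sem_later T) n"
    by (cases n) (auto simp: sem_later_def sem_arr_def less_Suc_eq_le[symmetric] All_less_Suc2)
qed

lemma sem_arr_agree:
  "agree n S S' \<Longrightarrow> agree n T T' \<Longrightarrow> agree n (sem_arr S T) (sem_arr S' T')"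
  unfolding agree_def sem_arr_def by auto

lemma sem_later_agree: "agree n S S' \<Longrightarrow> agree (Suc n) (sem_later S) (sem_later S')"
  unfolding agree_def sem_later_def by (auto split: nat.splits)

lemma sem_fix_agree:
  assumes "\<And>S S'. agree n S S' \<Longrightarrow> agree n (F S) (F' S')"
  shows "agree n (sem_fix F) (sem_fix F')"
proof -
  have "agree n ((F ^^ j) sem_univ) ((F' ^^ j) sem_univ)" for j
    by (induction j) (simp_all add: assms)
  then show ?thesis unfolding agree_def sem_fix_def by blast
qed

lemma interp_agree:
  "(\<And>X. agree n (r X) (r' X)) \<Longrightarrow> list_all2 (agree n) b b' \<Longrightarrow>
   agree n (interp A r b) (interp A r' b')"
proof (induction A arbitrary: b b')
  case (TB i)
  then have "length b = length b'" "\<forall>i<length b. agree n (b ! i) (b' ! i)"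
    by (simp_all add: list_all2_conv_all_nth)
  then show ?case by simp
next
  case (Lat A)
  then have "agree (Suc n) (interp (Lat A) r b) (interp (Lat A) r' b')"
    using sem_later_agree by simp
  then show ?case using agree_mono le_SucI by blast
next
  case (Mu A)
  have "agree n (interp A r (S # b)) (interp A r' (S' # b'))" if "agree n S S'" for S S'
    using that Mu by simp
  then show ?case by (simp add: sem_fix_agree)
qed (auto simp: sem_arr_agree)

lemma interp_tv_aux:
  "tv_aux bs (tail A) \<Longrightarrow> length bs \<le> length b \<Longrightarrow> (\<And>i. i < length bs \<Longrightarrow> b ! i = sem_univ) \<Longrightarrow>
   interp A r b = sem_univ"
proof (induction A arbitrary: bs b)
  case (Lat A)
  then have "interp A r b = sem_univ" by (intro Lat.IH[of "map (\<lambda>_. True) bs"]) auto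
  then show ?case by simp
next
  case (Mu A)
  have "interp A r (sem_univ # b) = sem_univ"
    using Mu.prems by (intro Mu.IH[of "False # bs"]) (auto simp: nth_Cons split: nat.splits)
  then show ?case by (simp add: sem_fix_univ)
qed auto

lemma interp_top_variant: "top_variant A \<Longrightarrow> interp A r b = sem_univ"
  unfolding top_variant_def using interp_tv_aux[of "[]"] by auto

text \<open>Properness is what makes the body of a \<open>\<mu>\<close> contractive: every occurrence of the
  bound variable is guarded by a \<open>\<bullet>\<close> or sits below a top variant, which denotes the
  full sequence.\<close>
lemma interp_agree_Suc_if_proper:
  "proper k A \<Longrightarrow> k < length b \<Longrightarrow> agree n (b ! k) S \<Longrightarrow>
   agree (Suc n) (interp A r b) (interp A r (b[k := S]))"
proof (induction A arbitrary: k b n)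
  case (Lat A)
  have "list_all2 (agree n) b (b[k := S])"
    using Lat.prems by (auto simp: list_all2_conv_all_nth nth_list_update)
  then show ?case by (simp add: interp_agree sem_later_agree)
next
  case (Arr A B)
  then show ?case by (cases "top_variant B") (auto simp: interp_top_variant sem_arr_agree)
next
  case (Mu A)
  show ?case
  proof (cases "top_variant (Mu A)")
    case True
    then show ?thesis by (simp add: interp_top_variant del: interp.simps)
  next
    case False
    with Mu.prems have pA: "proper (Suc k) A" by simp
    have "agree (Suc n) (interp A r (T # b)) (interp A r (T' # b[k := S]))"
      if "agree (Suc n) T T'" for T T'
    proof -
      have "agree (Suc n) (interp A r (T # b)) (interp A r (T' # b))"
        using that by (intro interp_agree) (simp_all add: list_all2_refl)
      moreover have "agree (Suc n) (interp A r (T' # b)) (interp A r (T' # b[k := S]))"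
        using Mu.IH[OF pA, of "T' # b"] Mu.prems by simp
      ultimately show ?thesis by (rule agree_trans)
    qed
    then show ?thesis by (simp add: sem_fix_agree)
  qed
qed auto

lemma contractive_interp_Mu: "proper 0 A \<Longrightarrow> contractive (\<lambda>S. interp A r (S # b))"
  unfolding contractive_def using interp_agree_Suc_if_proper[of 0 A "_ # b"] by simp

definition admissible :: "sem \<Rightarrow> bool" where
  "admissible S \<longleftrightarrow> antimono S \<and> (\<forall>n M M'. beta M M' \<longrightarrow> M' \<in> S n \<longrightarrow> M \<in> S n)"

lemma admissible_beta_expand: "admissible S \<Longrightarrow> beta M M' \<Longrightarrow> M' \<in> S n \<Longrightarrow> M \<in> S n"
  unfolding admissible_def by blast

lemma admissible_antimonoD: "admissible S \<Longrightarrow> m \<le> n \<Longrightarrow> S n \<subseteq> S m"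
  unfolding admissible_def by (simp add: antimonoD)

lemma admissible_sem_univ: "admissible sem_univ"
  by (simp add: admissible_def sem_univ_def antimono_iff_le_Suc)

lemma admissible_sem_later: "admissible S \<Longrightarrow> admissible (sem_later S)"
  unfolding admissible_def antimono_iff_le_Suc sem_later_def by (auto split: nat.splits)

lemma admissible_sem_arr:
  assumes "admissible T"
  shows "admissible (sem_arr S T)"
  unfolding admissible_def antimono_iff_le_Suc
proof (intro conjI allI impI)
  show "sem_arr S T (Suc n) \<le> sem_arr S T n" for n
    unfolding sem_arr_def by auto
  fix n M M' assume "beta M M'" "M' \<in> sem_arr S T n"
  then show "M \<in> sem_arr S T n"
    unfolding sem_arr_def using admissible_beta_expand[OF assms] beta.intros(2) by blast
qed

lemma admissible_sem_fix:
  assumes "contractive F" and "\<And>S. admissible S \<Longrightarrow> admissible (F S)"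
  shows "admissible (sem_fix F)"
proof -
  have adm: "admissible ((F ^^ j) sem_univ)" for j
    by (induction j) (simp_all add: admissible_sem_univ assms(2))
  have "sem_fix F (Suc n) \<subseteq> sem_fix F n" for n
  proof -
    have "sem_fix F (Suc n) \<subseteq> (F ^^ Suc (Suc n)) sem_univ n"
      unfolding sem_fix_def by (rule admissible_antimonoD[OF adm]) simp
    also have "\<dots> = sem_fix F n"
      using agree_funpow_sem_univ[OF assms(1), of "Suc n" 1] unfolding agree_def sem_fix_def by simp
    finally show ?thesis .
  qed
  with adm show ?thesis
    unfolding admissible_def antimono_iff_le_Suc sem_fix_def by blast
qed

lemma admissible_interp:
  "texk (length b) A \<Longrightarrow> (\<And>X. admissible (r X)) \<Longrightarrow> list_all admissible b \<Longrightarrow>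
   admissible (interp A r b)"
proof (induction A arbitrary: b)
  case (TB i)
  then show ?case by (auto elim: texk_TBE simp: list_all_length)
next
  case (Mu A)
  from Mu.prems(1) have "texk (Suc (length b)) A" "proper 0 A" by (auto elim: texk_MuE)
  with Mu show ?case
    by (auto intro!: admissible_sem_fix contractive_interp_Mu)
qed (auto elim!: texk_ArrE texk_LatE intro: admissible_sem_arr admissible_sem_later)

lemma admissible_interp_texp:
  "texp A \<Longrightarrow> (\<And>X. admissible (r X)) \<Longrightarrow> admissible (interp A r [])"
  by (simp add: admissible_interp texp_def)

lemma interp_append_if_texk: "texk (length b) U \<Longrightarrow> interp U r (b @ c) = interp U r b"
proof (induction U arbitrary: b)
  case (TB i) then show ?case by (auto elim!: texk_TBE simp: nth_append)
next
  case (Mu A)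
  from Mu.prems have "texk (Suc (length b)) A" by (auto elim: texk_MuE)
  with Mu.IH[of "_ # b"] show ?case by simp
qed (auto elim!: texk_ArrE texk_LatE)

lemma interp_open_rec:
  "texk 0 U \<Longrightarrow> length b = k \<Longrightarrow> interp (open_rec k U A) r b = interp A r (b @ [interp U r []])"
proof (induction A arbitrary: k b)
  case (TB i)
  then show ?case using interp_append_if_texk[of "[]" U r b] by (auto simp: nth_append)
next
  case (Mu A)
  have "interp (open_rec (Suc k) U A) r (S # b) = interp A r ((S # b) @ [interp U r []])" for S
    using Mu.prems by (intro Mu.IH) auto
  then show ?case by simp
qed auto

lemma interp_open_ty: "texp U \<Longrightarrow> interp (open_ty A U) r [] = interp A r [interp U r []]"
  using interp_open_rec[of U "[]" 0 A r] by (simp add: open_ty_def texp_def)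

lemma interp_fun_upd_fresh: "X \<notin> fv A \<Longrightarrow> interp A (r(X := S)) b = interp A r b"
  by (induction A arbitrary: b) auto

lemma interp_open_ty_TV_fun_upd:
  "X \<notin> fv A \<Longrightarrow> interp (open_ty A (TV X)) (r(X := S)) [] = interp A r [S]"
  by (simp add: interp_open_ty texp_def texk.intros interp_fun_upd_fresh)

lemma fv_open_rec: "fv A \<subseteq> fv (open_rec k U A)"
  by (induction A arbitrary: k) auto

section \<open>Soundness of the model\<close>

lemma teq_sound: "teq e A B \<Longrightarrow> interp A r [] = interp B r []"
proof (induction rule: teq.induct)
  case (arr_top A)
  then show ?case by (simp add: interp_top)
next
  case (unfold A)
  then have "proper 0 A" by (auto simp: texp_def elim: texk_MuE)
  have "interp (open_ty A (Mu A)) r [] = interp A r [interp (Mu A) r []]"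
    using unfold.hyps by (rule interp_open_ty)
  also have "\<dots> = interp (Mu A) r []"
    using sem_fix_eq[OF contractive_interp_Mu[OF \<open>proper 0 A\<close>, of r "[]"]] by simp
  finally show ?case by simp
next
  case (fixpt A C)
  then have "proper 0 C" by (auto simp: texp_def elim: texk_MuE)
  moreover have "interp C r [interp A r []] = interp A r []"
    by (simp only: interp_open_ty[OF fixpt.hyps(1), symmetric] fixpt.IH[symmetric])
  ultimately have "interp A r [] = sem_fix (\<lambda>S. interp C r [S])"
    by (rule sem_fix_unique[OF contractive_interp_Mu])
  then show ?case by simp
next
  case (dist A B)
  then show ?case by (simp add: sem_later_arr)
qed simp_all

lemma sem_arr_mono: "S' \<le> S \<Longrightarrow> T \<le> T' \<Longrightarrow> sem_arr S T \<le> sem_arr S' T'"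
  unfolding sem_arr_def le_fun_def by blast

lemma sem_later_mono: "S \<le> S' \<Longrightarrow> sem_later S \<le> sem_later S'"
  unfolding sem_later_def le_fun_def by (simp split: nat.splits)

lemma sem_le_sem_later:
  assumes "admissible S"
  shows "S \<le> sem_later S"
proof -
  have "S (Suc n) \<subseteq> S n" for n
    using admissible_antimonoD[OF assms, of n "Suc n"] by simp
  then show ?thesis by (auto simp: le_fun_def sem_later_def split: nat.splits)
qed

text \<open>Induction on the step index: to bound a contractive fixed point it suffices to bound
  the functional on admissible arguments that are already bounded; contractiveness lets us
  apply this to the truncation of the fixed point below the current index.\<close>
lemma sem_fix_le:
  assumes "contractive F" and "admissible (sem_fix F)"
    and "\<And>S. admissible S \<Longrightarrow> S \<le> T \<Longrightarrow> F S \<le> T"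
  shows "sem_fix F \<le> T"
proof -
  have "sem_fix F m \<subseteq> T m" for m
  proof (induction m rule: less_induct)
    case (less m)
    define S where "S k = (if k < m then sem_fix F k else {})" for k
    have "admissible S"
      using assms(2) unfolding admissible_def antimono_def S_def by auto
    moreover have "S \<le> T"
      using less.IH unfolding S_def le_fun_def by simp
    ultimately have "F S m \<subseteq> T m"
      using assms(3) by (simp add: le_fun_def)
    moreover have "agree (Suc m) (F S) (F (sem_fix F))"
      using assms(1) by (rule contractiveD) (simp add: agree_def S_def)
    ultimately show ?case
      by (simp add: agree_def sem_fix_eq[OF assms(1)])
  qed
  then show ?thesis by (simp add: le_fun_def)
qed

lemma fun_upd_le_assm:
  assumes "\<forall>(X', Y')\<in>g. r X' \<le> r Y'" and "X \<notin> FTV g" and "Y \<notin> FTV g"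
    and "S \<le> T" and "X \<noteq> Y"
  shows "\<forall>(X', Y')\<in>g \<union> {(X, Y)}. (r(X := S, Y := T)) X' \<le> (r(X := S, Y := T)) Y'"
proof -
  have "X' \<notin> {X, Y} \<and> Y' \<notin> {X, Y}" if "(X', Y') \<in> g" for X' Y'
    using that assms(2,3) unfolding FTV_def by force
  with assms(1,4,5) show ?thesis by auto
qed

lemma sub_sound:
  "sub g A B \<Longrightarrow> (\<And>X. admissible (r X)) \<Longrightarrow> \<forall>(X, Y)\<in>g. r X \<le> r Y \<Longrightarrow>
   interp A r [] \<le> interp B r []"
proof (induction arbitrary: r rule: sub.induct)
  case (top g A)
  then show ?case by (simp add: interp_top sem_univ_def le_fun_def)
next
  case (eq g A B)
  then show ?case by (simp add: teq_sound)
next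
  case (trans g1 A B g2 C)
  then show ?case by (meson UnCI order_trans)
next
  case (lat g A B)
  then show ?case by (simp add: sem_later_mono)
next
  case (arr g1 A' A g2 B B')
  then show ?case by (simp add: sem_arr_mono)
next
  case (later g A)
  then show ?case by (simp add: sem_le_sem_later admissible_interp_texp)
next
  case (mu g X Y A B)
  have XY: "X \<noteq> Y" using mu.hyps(2) unfolding wf_assm_def by auto
  have fresh: "X \<notin> fv A" "Y \<notin> fv A" "X \<notin> fv B" "Y \<notin> fv B"
    using mu.hyps(3-6) fv_open_rec[of A 0 "TV X"] fv_open_rec[of B 0 "TV Y"]
    by (auto simp: open_ty_def)
  have tA: "texk 1 A" and tB: "texk 1 B"
    using sub_texp[OF mu.hyps(1)] texp_open_ty_TV_D by auto
  define T where "T = interp (Mu B) r []"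
  have "sem_fix (\<lambda>S. interp A r [S]) \<le> T"
  proof (rule sem_fix_le)
    show "contractive (\<lambda>S. interp A r [S])"
      using contractive_interp_Mu[OF mu.hyps(7)] .
    show "admissible (sem_fix (\<lambda>S. interp A r [S]))"
      using tA mu.hyps(7) mu.prems(1) admissible_interp_texp[of "Mu A" r]
      by (simp add: texp_def texk.intros)
    fix S assume S: "admissible S" "S \<le> T"
    define r' where "r' = r(X := S, Y := T)"
    have "admissible (r' Z)" for Z
      using S(1) tB mu.hyps(8) mu.prems(1) admissible_interp_texp[of "Mu B" r]
      by (simp add: r'_def T_def texp_def texk.intros)
    moreover have "\<forall>(X', Y')\<in>g \<union> {(X, Y)}. r' X' \<le> r' Y'"
      using mu.prems(2) mu.hyps(5,6) S(2) XY unfolding r'_def by (intro fun_upd_le_assm) auto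
    ultimately have "interp (open_ty A (TV X)) r' [] \<le> interp (open_ty B (TV Y)) r' []"
      by (rule mu.IH)
    moreover have "interp (open_ty A (TV X)) r' [] = interp A r [S]"
    proof -
      have "r' = (r(Y := T))(X := S)" using XY by (simp add: r'_def fun_upd_twist)
      with fresh show ?thesis by (simp add: interp_open_ty_TV_fun_upd interp_fun_upd_fresh)
    qed
    moreover have "interp (open_ty B (TV Y)) r' [] = T"
      using fresh by (simp add: r'_def interp_open_ty_TV_fun_upd interp_fun_upd_fresh T_def
          sem_fix_eq[OF contractive_interp_Mu[OF mu.hyps(8)]])
    ultimately show "interp A r [S] \<le> T" by simp
  qed
  then show ?case by (simp add: T_def)
qed auto

definition sat_ctx :: "(nat \<Rightarrow> sem) \<Rightarrow> nat \<Rightarrow> (nat \<rightharpoonup> ty) \<Rightarrow> (nat \<Rightarrow> tm) \<Rightarrow> bool" where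
  "sat_ctx r n G s \<longleftrightarrow> (\<forall>x B. G x = Some B \<longrightarrow> s x \<in> interp B r [] n)"

lemma sat_ctx_later: "sat_ctx r n G s \<Longrightarrow> sat_ctx r (Suc n) (ctx_later G) s"
  by (auto simp: sat_ctx_def ctx_later_def sem_later_def)

lemma sat_ctx_ext:
  assumes "sat_ctx r n G s" and "k \<le> n" and "N \<in> interp A r [] k"
    and "ctx_ok G" and "\<And>X. admissible (r X)"
  shows "sat_ctx r k (ctx_ext A G) (scons N s)"
  unfolding sat_ctx_def
proof (intro allI impI)
  fix x B assume B: "ctx_ext A G x = Some B"
  show "scons N s x \<in> interp B r [] k"
  proof (cases x)
    case 0
    with B assms(3) show ?thesis by (simp add: ctx_ext_def scons_def)
  next
    case (Suc y)
    with B have "G y = Some B" by (simp add: ctx_ext_def)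
    with assms have "s y \<in> interp B r [] n" "admissible (interp B r [])"
      by (auto simp: sat_ctx_def admissible_interp_texp dest: texp_if_ctx_ok)
    with Suc assms(2) show ?thesis by (auto simp: scons_def dest: admissible_antimonoD)
  qed
qed

lemma sat_ctx_map_add:
  assumes "sat_ctx r n (G1 ++ G2) s" and "compat G1 G2"
  shows "sat_ctx r n G1 s" and "sat_ctx r n G2 s"
proof -
  have "(G1 ++ G2) x = Some B" if "G1 x = Some B" for x B
  proof (cases "G2 x")
    case (Some C)
    with that have "x \<in> dom G1 \<inter> dom G2" by blast
    with assms(2) that show ?thesis by (simp add: Defs.compat_def)
  qed (simp add: that map_add_def)
  then show "sat_ctx r n G1 s" "sat_ctx r n G2 s"
    using assms(1) by (auto simp: sat_ctx_def)
qed

lemma Lam_in_sem_arr: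
  assumes "admissible T" and "\<And>k N. k \<le> n \<Longrightarrow> N \<in> S k \<Longrightarrow> subst M N 0 \<in> T k"
  shows "Lam M \<in> sem_arr S T n"
  using assms by (auto simp: sem_arr_def intro: admissible_beta_expand beta.intros(1))

lemma typing_sound:
  "typing G M A \<Longrightarrow> (\<And>X. admissible (r X)) \<Longrightarrow> sat_ctx r n G s \<Longrightarrow>
   psubst s M \<in> interp A r [] n"
proof (induction arbitrary: s n rule: typing.induct)
  case (var G x A)
  then show ?case by (simp add: sat_ctx_def)
next
  case (shift G M A)
  then have "psubst s M \<in> interp (Lat A) r [] (Suc n)"
    by (simp add: sat_ctx_later)
  then show ?case by (simp add: sem_later_def)
next
  case (top G M)
  then show ?case by (simp add: interp_top sem_univ_def)
next
  case (sub G M A B)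
  then have "psubst s M \<in> interp A r [] n" by blast
  moreover have "interp A r [] \<le> interp B r []"
    using sub.hyps(2) sub.prems(1) sub_sound by (simp add: subtype_def)
  ultimately show ?case by (auto simp: le_fun_def)
next
  case (arrI A G M B)
  have "ctx_ok G" "texp B" using typing_wf[OF arrI.hyps] by auto
  with arrI show ?case
    by (auto simp: subst_psubst_subst_up admissible_interp_texp sat_ctx_ext intro!: Lam_in_sem_arr)
next
  case (arrE G1 M A B G2 N)
  from arrE.prems(2) arrE.hyps(3) have "sat_ctx r n G1 s" "sat_ctx r n G2 s"
    by (rule sat_ctx_map_add)+
  with arrE.IH arrE.prems(1) have "psubst s M \<in> sem_arr (interp A r []) (interp B r []) n"
    and "psubst s N \<in> interp A r [] n"
    by simp_all
  then show ?case by (auto simp: sem_arr_def)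
qed

section \<open>Bullet-free types and normalization\<close>

lemma bullet_free_tail: "bullet_free A \<Longrightarrow> bullet_free (tail A)"
  by (induction A) simp_all

lemma not_tv_aux_bullet_free: "bullet_free T \<Longrightarrow> \<forall>b\<in>set bs. \<not> b \<Longrightarrow> \<not> tv_aux bs T"
  by (induction T arbitrary: bs) (auto dest: nth_mem)

lemma not_top_variant_bullet_free: "bullet_free B \<Longrightarrow> \<not> top_variant B"
  unfolding top_variant_def using bullet_free_tail not_tv_aux_bullet_free by auto

text \<open>A bullet-free type that is proper in a variable does not mention it at all.\<close>
lemma interp_list_update_bullet_free:
  "proper k A \<Longrightarrow> bullet_free A \<Longrightarrow> k < length b \<Longrightarrow> interp A r (b[k := S]) = interp A r b"
proof (induction A arbitrary: k b)
  case (Arr A B)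
  then show ?case by (simp add: not_top_variant_bullet_free)
next
  case (Mu A)
  then have "proper (Suc k) A" using not_top_variant_bullet_free by auto
  with Mu.IH[of "Suc k" "_ # b"] Mu.prems show ?case by simp
qed auto

definition wn_sem :: sem where
  "wn_sem = (\<lambda>_. {M. WN M})"

definition saturated :: "tm set \<Rightarrow> bool" where
  "saturated S \<longleftrightarrow> Collect neutral \<subseteq> S \<and> S \<subseteq> Collect WN"

lemma admissible_wn_sem: "admissible wn_sem"
  by (auto simp: admissible_def wn_sem_def antimono_def intro: WN_beta_expand)

lemma saturated_wn_sem: "saturated (wn_sem n)"
  by (auto simp: saturated_def wn_sem_def WN_if_neutral)

lemma saturated_sem_arr:
  assumes "\<And>k. saturated (S k)" and "\<And>k. saturated (T k)"
  shows "saturated (sem_arr S T n)"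
  unfolding saturated_def
proof safe
  fix M assume M: "neutral M"
  have "App M N \<in> T k" if "N \<in> S k" for k N
  proof -
    from that assms(1) have "WN N" by (auto simp: saturated_def)
    with M have "neutral (App M N)" by (rule neutral.intros)
    with assms(2) show ?thesis by (auto simp: saturated_def)
  qed
  then show "M \<in> sem_arr S T n" by (simp add: sem_arr_def)
next
  fix M assume M: "M \<in> sem_arr S T n"
  obtain x where x: "x \<notin> fv_tm M"
    using ex_new_if_finite[OF infinite_UNIV_nat finite_fv_tm] by blast
  from assms(1) have "Var x \<in> S n" by (auto simp: saturated_def intro: neutral.intros)
  with M have "App M (Var x) \<in> T n" by (auto simp: sem_arr_def)
  with assms(2) have "WN (App M (Var x))" by (auto simp: saturated_def)
  then show "WN M" using x by (rule WN_of_WN_App_Var_fresh)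
qed

lemma saturated_interp_bullet_free:
  "bullet_free A \<Longrightarrow> texk (length b) A \<Longrightarrow> \<forall>S\<in>set b. \<forall>n. saturated (S n) \<Longrightarrow>
   saturated (interp A (\<lambda>_. wn_sem) b n)"
proof (induction A arbitrary: b n)
  case (TV X)
  then show ?case by (simp add: saturated_wn_sem)
next
  case (TB i)
  then show ?case by (auto elim!: texk_TBE)
next
  case (Arr A B)
  then show ?case by (auto elim!: texk_ArrE intro: saturated_sem_arr)
next
  case (Mu A)
  from Mu.prems(2) have "texk (Suc (length b)) A" "proper 0 A" by (auto elim: texk_MuE)
  moreover have "interp (Mu A) (\<lambda>_. wn_sem) b = interp A (\<lambda>_. wn_sem) (wn_sem # b)"
    using interp_list_update_bullet_free[OF \<open>proper 0 A\<close>, of "wn_sem # b"] Mu.prems(1)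
    by (simp add: sem_fix_const[where W = wn_sem])
  ultimately show ?case
    using Mu by (simp add: saturated_wn_sem)
qed simp

lemma saturated_interp_texp:
  "bullet_free B \<Longrightarrow> texp B \<Longrightarrow> saturated (interp B (\<lambda>_. wn_sem) [] n)"
  using saturated_interp_bullet_free[of B "[]"] by (simp add: texp_def)

lemma sat_ctx_Var_bullet_free:
  assumes "ctx_ok G" and "\<forall>B\<in>ran G. bullet_free B"
  shows "sat_ctx (\<lambda>_. wn_sem) n G Var"
  unfolding sat_ctx_def
proof (intro allI impI)
  fix x B assume "G x = Some B"
  with assms have "saturated (interp B (\<lambda>_. wn_sem) [] n)"
    by (intro saturated_interp_texp) (auto simp: ran_def dest: texp_if_ctx_ok)
  then show "Var x \<in> interp B (\<lambda>_. wn_sem) [] n"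
    by (auto simp: saturated_def intro: neutral.intros)
qed

theorem theorem8:
  assumes "typing G M A"
    and "\<forall>B\<in>ran G. bullet_free B"
    and "bullet_free A"
  shows "beta_normalizable M"
proof -
  have wf: "ctx_ok G" "texp A"
    using typing_wf[OF assms(1)] by auto
  have "psubst Var M \<in> interp A (\<lambda>_. wn_sem) [] 0"
    using assms(1) admissible_wn_sem sat_ctx_Var_bullet_free[OF wf(1) assms(2)]
    by (rule typing_sound)
  moreover have "saturated (interp A (\<lambda>_. wn_sem) [] 0)"
    using assms(3) wf(2) by (rule saturated_interp_texp)
  ultimately show ?thesis
    by (auto simp: saturated_def psubst_Var)
qed

end
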